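(* Let $\mathbb{Z}$ be a finite-dimensional Euclidean space, $L>0$, $G:\mathbb{Z}\to\mathbb{Z}$ $\frac1L$-co-coercive, $\beta_k\in(0,1)$, $\eta_k=(1-\beta_k)/L$, and let $z^0\in\mathbb{Z}$, $\tilde z^k\in\mathbb{Z}$ arbitrary and $z^{k+1}=\beta_kz^0+(1-\beta_k)z^k-\eta_k\tilde z^k$ for $k\ge0$. Then for $k\ge0$, \[\frac1{2L}\|G(z^{k+1})\|^2-\frac{\beta_k}{1-\beta_k}\langle G(z^{k+1}),z^0-z^{k+1}\rangle\le\frac{1-2\beta_k}{2L}\|G(z^k)\|^2-\beta_k\langle G(z^k),z^0-z^k\rangle+\frac{\beta_k}L\langle G(z^k),G(z^k)-\tilde z^k\rangle+\frac1{2L}\|G(z^k)-\tilde z^k\|^2.\] In particular, if $\beta_k=1/(k+2)$, then for $k\ge0$, \[\mathcal{L}_{k+1}\le\mathcal{L}_k+\frac1{12L}\|G(z^k)\|^2+\frac{4(k+1)^2}{L}\|G(z^k)-\tilde z^k\|^2,\] where $\mathcal{L}_k:=\frac{k(k+1)}{2L}\|G(z^k)\|^2-(k+1)\langle G(z^k),z^0-z^k\rangle$.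
   Context: $G$ is $\frac1L$-co-coercive if $\langle G(x_1)-G(x_2),x_1-x_2\rangle\ge\frac1L\|G(x_1)-G(x_2)\|^2$ for all $x_1,x_2$. *)

theory Defs
  imports "HOL-Analysis.Analysis"
begin

definition cocoercive :: "real \<Rightarrow> ('a::real_inner \<Rightarrow> 'a) \<Rightarrow> bool" where
  "cocoercive L G \<longleftrightarrow>
     (\<forall>x1 x2. inner (G x1 - G x2) (x1 - x2) \<ge> (1 / L) * (norm (G x1 - G x2))\<^sup>2)"

definition lyap :: "real \<Rightarrow> ('a::real_inner \<Rightarrow> 'a) \<Rightarrow> (nat \<Rightarrow> 'a) \<Rightarrow> nat \<Rightarrow> real" where
  "lyap L G z k = real k * (real k + 1) / (2 * L) * (norm (G (z k)))\<^sup>2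
                  - (real k + 1) * inner (G (z k)) (z 0 - z k)"

end

theory Submission
  imports Defs
begin

text \<open>Write \<open>z, z'\<close> for consecutive iterates and \<open>u\<close> for the estimate of \<open>G z\<close>.
  Expressing \<open>z' - z\<close> once through \<open>z\<^sub>0 - z\<close> and once through \<open>z\<^sub>0 - z'\<close> turns
  co-coercivity of \<open>G\<close> between \<open>z\<close> and \<open>z'\<close> into the one-step inequality, whose slack is
  the co-coercivity gap plus the square \<open>\<parallel>G z' - 2 G z + u\<parallel>\<^sup>2 / (2 L)\<close>.
  For \<open>\<beta>\<^sub>k = 1 / (k + 2)\<close>, multiplying by \<open>(k + 1) (k + 2)\<close> turns both sides into
  Lyapunov values, and Young's inequality absorbs the cross term \<open>\<langle>G z, G z - u\<rangle>\<close>.\<close>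

lemma cocoerciveD:
  assumes "cocoercive L G"
  shows "inner (G x - G y) (x - y) \<ge> 1 / L * (norm (G x - G y))\<^sup>2"
  using assms unfolding cocoercive_def by blast

lemma inner_le_Young:
  fixes x y :: "'a::real_inner"
  assumes "e > 0"
  shows "inner x y \<le> (norm x)\<^sup>2 / (4 * e) + e * (norm y)\<^sup>2"
proof -
  have "0 \<le> (norm (x - (2 * e) *\<^sub>R y))\<^sup>2" by simp
  also have "\<dots> = (norm x)\<^sup>2 - 4 * e * inner x y + 4 * e\<^sup>2 * (norm y)\<^sup>2"
    unfolding power2_norm_eq_inner
    by (simp add: inner_diff_left inner_diff_right inner_commute power2_eq_square algebra_simps)
  finally show ?thesis
    using assms by (simp add: field_simps power2_eq_square)
qed

lemma halpern_step_bound: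
  fixes G :: "'a::real_inner \<Rightarrow> 'a"
  assumes L: "L > 0" and coco: "cocoercive L G" and b: "0 < b" "b < 1"
    and step: "z' = b *\<^sub>R z0 + (1 - b) *\<^sub>R z - ((1 - b) / L) *\<^sub>R u"
  shows "1 / (2 * L) * (norm (G z'))\<^sup>2 - b / (1 - b) * inner (G z') (z0 - z')
     \<le> (1 - 2 * b) / (2 * L) * (norm (G z))\<^sup>2 - b * inner (G z) (z0 - z)
       + b / L * inner (G z) (G z - u) + 1 / (2 * L) * (norm (G z - u))\<^sup>2"
proof -
  define g' g where "g' = G z'" and "g = G z"
  have displ_old: "z' - z = b *\<^sub>R (z0 - z) - ((1 - b) / L) *\<^sub>R u"
    unfolding step by (simp add: algebra_simps)
  have "b *\<^sub>R (z0 - z') - ((1 - b) / L) *\<^sub>R u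
      = (b *\<^sub>R (z0 - z) - ((1 - b) / L) *\<^sub>R u) - b *\<^sub>R (z' - z)"
    by (simp add: algebra_simps)
  also have "\<dots> = (1 - b) *\<^sub>R (z' - z)"
    unfolding displ_old[symmetric] by (simp add: algebra_simps)
  finally have scaled: "(1 - b) *\<^sub>R (z' - z) = b *\<^sub>R (z0 - z') - ((1 - b) / L) *\<^sub>R u" ..
  have "z' - z = (1 / (1 - b)) *\<^sub>R ((1 - b) *\<^sub>R (z' - z))"
    using b by simp
  also have "\<dots> = (b / (1 - b)) *\<^sub>R (z0 - z') - (1 / L) *\<^sub>R u"
    unfolding scaled using b by (simp add: scaleR_diff_right)
  finally have displ_new: "z' - z = (b / (1 - b)) *\<^sub>R (z0 - z') - (1 / L) *\<^sub>R u" .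
  have inner_new: "inner g' (z' - z) = b / (1 - b) * inner g' (z0 - z') - inner g' u / L"
    unfolding displ_new by (simp add: inner_diff_right)
  have inner_old: "inner g (z' - z) = b * inner g (z0 - z) - (1 - b) / L * inner g u"
    unfolding displ_old by (simp add: inner_diff_right)
  have "inner (g' - g) (z' - z) = b / (1 - b) * inner g' (z0 - z') - inner g' u / L
                  - b * inner g (z0 - z) + (1 - b) / L * inner g u"
    by (simp add: inner_diff_left inner_new inner_old)
  then have gap: "0 \<le> b / (1 - b) * inner g' (z0 - z') - inner g' u / L
                  - b * inner g (z0 - z) + (1 - b) / L * inner g u - 1 / L * (norm (g' - g))\<^sup>2"
    using cocoerciveD[OF coco, of z' z] unfolding g'_def g_def by linarith
  have square: "0 \<le> 1 / (2 * L) * (norm (g' - 2 *\<^sub>R g + u))\<^sup>2"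
    using L by simp
  have "1 / (2 * L) * (norm g')\<^sup>2 - b / (1 - b) * inner g' (z0 - z')
     \<le> (1 - 2 * b) / (2 * L) * (norm g)\<^sup>2 - b * inner g (z0 - z)
       + b / L * inner g (g - u) + 1 / (2 * L) * (norm (g - u))\<^sup>2"
    using add_nonneg_nonneg[OF square gap] L b
    by (simp add: power2_norm_eq_inner inner_diff_left inner_diff_right inner_add_left
        inner_add_right inner_commute field_simps)
  then show ?thesis unfolding g'_def g_def .
qed

lemma halpern_lyap_step:
  fixes G :: "'a::real_inner \<Rightarrow> 'a" and z :: "nat \<Rightarrow> 'a"
  assumes L: "L > 0" and coco: "cocoercive L G"
    and step: "z (Suc k) = (1 / (real k + 2)) *\<^sub>R z 0 + (1 - 1 / (real k + 2)) *\<^sub>R z k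
                 - ((1 - 1 / (real k + 2)) / L) *\<^sub>R u"
  shows "lyap L G z (Suc k) \<le> lyap L G z k
           + (real k + 1) / L * inner (G (z k)) (G (z k) - u)
           + (real k + 1) * (real k + 2) / (2 * L) * (norm (G (z k) - u))\<^sup>2"
proof -
  define c :: real where "c = real k + 2"
  define N' A N C I D where "N' = (norm (G (z (Suc k))))\<^sup>2"
    and "A = inner (G (z (Suc k))) (z 0 - z (Suc k))" and "N = (norm (G (z k)))\<^sup>2"
    and "C = inner (G (z k)) (z 0 - z k)" and "I = inner (G (z k)) (G (z k) - u)"
    and "D = (norm (G (z k) - u))\<^sup>2"
  have c: "c > 1" unfolding c_def by simp
  then have b: "0 < 1 / c" "1 / c < 1" by simp_all
  have bound: "1 / (2 * L) * N' - (1 / c) / (1 - 1 / c) * A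
      \<le> (1 - 2 * (1 / c)) / (2 * L) * N - 1 / c * C + 1 / c / L * I + 1 / (2 * L) * D"
    using halpern_step_bound[OF L coco b step[folded c_def]]
    unfolding N'_def A_def N_def C_def I_def D_def .
  have "lyap L G z (Suc k) = (c - 1) * c / (2 * L) * N' - c * A"
    unfolding lyap_def N'_def A_def c_def by (simp add: algebra_simps)
  also have "\<dots> = (c - 1) * c * (1 / (2 * L) * N' - (1 / c) / (1 - 1 / c) * A)"
    using c L by (simp add: field_simps)
  also have "\<dots> \<le> (c - 1) * c
      * ((1 - 2 * (1 / c)) / (2 * L) * N - 1 / c * C + 1 / c / L * I + 1 / (2 * L) * D)"
    using c by (intro mult_left_mono[OF bound]) simp
  also have "\<dots> = (c - 2) * (c - 1) / (2 * L) * N - (c - 1) * C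
                   + (c - 1) / L * I + (c - 1) * c / (2 * L) * D"
    using c L by (simp add: field_simps)
  also have "\<dots> = lyap L G z k + (real k + 1) / L * I + (real k + 1) * (real k + 2) / (2 * L) * D"
    unfolding lyap_def N_def C_def c_def by (simp add: algebra_simps)
  finally show ?thesis unfolding I_def D_def .
qed

lemma halpern_error_terms_le:
  fixes g d :: "'a::real_inner"
  assumes L: "L > 0" and t: "t \<ge> 1"
  shows "t / L * inner g d + t * (t + 1) / (2 * L) * (norm d)\<^sup>2
           \<le> 1 / (12 * L) * (norm g)\<^sup>2 + 4 * t\<^sup>2 / L * (norm d)\<^sup>2"
proof -
  have "t * inner g d \<le> (norm g)\<^sup>2 / 12 + 3 * t\<^sup>2 * (norm d)\<^sup>2"
    using inner_le_Young[of 3 g "t *\<^sub>R d"] by (simp add: power_mult_distrib)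
  moreover have "t * (t + 1) / 2 * (norm d)\<^sup>2 \<le> t\<^sup>2 * (norm d)\<^sup>2"
    using t by (intro mult_right_mono) (simp_all add: power2_eq_square field_simps)
  ultimately have "t * inner g d + t * (t + 1) / 2 * (norm d)\<^sup>2
      \<le> (norm g)\<^sup>2 / 12 + 4 * t\<^sup>2 * (norm d)\<^sup>2"
    by linarith
  then have "(t * inner g d + t * (t + 1) / 2 * (norm d)\<^sup>2) / L
      \<le> ((norm g)\<^sup>2 / 12 + 4 * t\<^sup>2 * (norm d)\<^sup>2) / L"
    using L by (intro divide_right_mono) simp_all
  then show ?thesis
    by (simp add: add_divide_distrib)
qed

theorem lemma15:
  fixes G :: "'a::euclidean_space \<Rightarrow> 'a"
    and L :: real
    and \<beta> :: "nat \<Rightarrow> real"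
    and z zt :: "nat \<Rightarrow> 'a"
  assumes L_pos: "L > 0"
    and coco: "cocoercive L G"
    and beta_range: "\<And>k. 0 < \<beta> k \<and> \<beta> k < 1"
    and iter: "\<And>k. z (Suc k) = \<beta> k *\<^sub>R z 0 + (1 - \<beta> k) *\<^sub>R z k - ((1 - \<beta> k) / L) *\<^sub>R zt k"
  shows "(\<forall>k. 1 / (2 * L) * (norm (G (z (Suc k))))\<^sup>2
               - \<beta> k / (1 - \<beta> k) * inner (G (z (Suc k))) (z 0 - z (Suc k))
             \<le> (1 - 2 * \<beta> k) / (2 * L) * (norm (G (z k)))\<^sup>2
               - \<beta> k * inner (G (z k)) (z 0 - z k)
               + \<beta> k / L * inner (G (z k)) (G (z k) - zt k)
               + 1 / (2 * L) * (norm (G (z k) - zt k))\<^sup>2)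
       \<and> ((\<forall>k. \<beta> k = 1 / (real k + 2)) \<longrightarrow>
            (\<forall>k. lyap L G z (Suc k)
                 \<le> lyap L G z k + 1 / (12 * L) * (norm (G (z k)))\<^sup>2
                   + 4 * (real k + 1)\<^sup>2 / L * (norm (G (z k) - zt k))\<^sup>2))"
proof (intro conjI allI impI)
  fix k
  show "1 / (2 * L) * (norm (G (z (Suc k))))\<^sup>2
          - \<beta> k / (1 - \<beta> k) * inner (G (z (Suc k))) (z 0 - z (Suc k))
        \<le> (1 - 2 * \<beta> k) / (2 * L) * (norm (G (z k)))\<^sup>2 - \<beta> k * inner (G (z k)) (z 0 - z k)
          + \<beta> k / L * inner (G (z k)) (G (z k) - zt k) + 1 / (2 * L) * (norm (G (z k) - zt k))\<^sup>2"
    using halpern_step_bound[OF L_pos coco _ _ iter] beta_range[of k] by blast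
next
  fix k
  assume "\<forall>k. \<beta> k = 1 / (real k + 2)"
  then have "z (Suc k) = (1 / (real k + 2)) *\<^sub>R z 0 + (1 - 1 / (real k + 2)) *\<^sub>R z k
               - ((1 - 1 / (real k + 2)) / L) *\<^sub>R zt k"
    using iter[of k] by simp
  from halpern_lyap_step[OF L_pos coco this]
  have "lyap L G z (Suc k) \<le> lyap L G z k
      + (real k + 1) / L * inner (G (z k)) (G (z k) - zt k)
      + (real k + 1) * (real k + 1 + 1) / (2 * L) * (norm (G (z k) - zt k))\<^sup>2"
    by (simp add: add.assoc)
  then show "lyap L G z (Suc k) \<le> lyap L G z k + 1 / (12 * L) * (norm (G (z k)))\<^sup>2
               + 4 * (real k + 1)\<^sup>2 / L * (norm (G (z k) - zt k))\<^sup>2"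
    using halpern_error_terms_le[OF L_pos, of "real k + 1" "G (z k)" "G (z k) - zt k"] by simp
qed

end
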